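(* Let $X \in \Lambda^2_{14} = \mathfrak{g}_2$ and let $u, v, y \in \mathbb{R}^7$ be mutually orthogonal. Then $$ X(u \times y, v \times y) = |y|^2 X(u,v) + X(y, (u \times v) \times y). $$
   Context: Equip $\mathbb{R}^7$ with its standard inner product and basis. Let $\varphi = e_{123} - e_{167} - e_{527} - e_{563} - e_{415} - e_{426} - e_{437}$ ($e_{ijk} = e_i\wedge e_j \wedge e_k$) and define the cross product by $\langle u\times v, w\rangle = \varphi(u,v,w)$. A skew bilinear form $X$ is identified with the operator $X$ given by $X(u,v) = \langle X(u),v\rangle$. $\Lambda^2_{14} = \mathfrak{g}_2$ is the set of skew bilinear forms $X$ on $\mathbb{R}^7$ such that $X(v\times w) = X(v)\times w + v \times X(w)$ for all $v,w$ (equivalently $X(u, v\times w) + X(v, w\times u) + X(w, u \times v) = 0$ for all $u,v,w$). *)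

theory Defs
  imports "HOL-Analysis.Analysis"
begin

text \<open>R^7 is modelled as real^7. The standard basis vector e_i (i = 1..7) is
  axis (of_nat i) 1, i.e. the i-th coordinate is indexed by of_nat i :: 7
  (so e_7 sits at the index 0 of the type 7; this is just a labelling).\<close>

definition cmp :: "real^7 \<Rightarrow> nat \<Rightarrow> real" where
  "cmp u i = u $ (of_nat i :: 7)"

text \<open>e_{ijk} = e_i \<and> e_j \<and> e_k evaluated on (u,v,w): the 3x3 determinant.\<close>
definition wedge3 :: "nat \<Rightarrow> nat \<Rightarrow> nat \<Rightarrow> real^7 \<Rightarrow> real^7 \<Rightarrow> real^7 \<Rightarrow> real" where
  "wedge3 i j k u v w =
     cmp u i * (cmp v j * cmp w k - cmp v k * cmp w j)
   - cmp u j * (cmp v i * cmp w k - cmp v k * cmp w i)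
   + cmp u k * (cmp v i * cmp w j - cmp v j * cmp w i)"

definition phi :: "real^7 \<Rightarrow> real^7 \<Rightarrow> real^7 \<Rightarrow> real" where
  "phi u v w = wedge3 1 2 3 u v w - wedge3 1 6 7 u v w - wedge3 5 2 7 u v w
             - wedge3 5 6 3 u v w - wedge3 4 1 5 u v w - wedge3 4 2 6 u v w
             - wedge3 4 3 7 u v w"

definition cross7 :: "real^7 \<Rightarrow> real^7 \<Rightarrow> real^7" where
  "cross7 u v = (\<chi> k. phi u v (axis k 1))"

text \<open>A skew bilinear form is represented by a skew-symmetric matrix A (the operator X),
  with X(u,v) = <X(u), v> = <A u, v>.\<close>
definition skew :: "real^7^7 \<Rightarrow> bool" where
  "skew A \<longleftrightarrow> transpose A = - A"

definition bform :: "real^7^7 \<Rightarrow> real^7 \<Rightarrow> real^7 \<Rightarrow> real" where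
  "bform A u v = (A *v u) \<bullet> v"

definition g2 :: "real^7^7 \<Rightarrow> bool" where
  "g2 A \<longleftrightarrow> skew A \<and>
     (\<forall>v w. A *v (cross7 v w) = cross7 (A *v v) w + cross7 v (A *v w))"

end

theory Submission
  imports Defs
begin

text \<open>Since X is a derivation of the cross product, X(u \<times> y) = Xu \<times> y + u \<times> Xy.
  Pairing with v \<times> y, the first term gives |y|^2 X(u,v) by the Lagrange-type identity
  <a \<times> y, b \<times> y> = |y|^2 <a,b> - <a,y><b,y> and v \<bottom> y. The second term is handled
  by the contraction identity
  <u \<times> w, v \<times> y> = <w, (u \<times> v) \<times> y> - 2<u,y><v,w> + <u,v><y,w> + <y,v><u,w>,
  whose correction terms vanish for mutually orthogonal u, v, y.\<close>

lemma exhaust_7: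
  fixes x :: 7
  shows "x = 1 \<or> x = 2 \<or> x = 3 \<or> x = 4 \<or> x = 5 \<or> x = 6 \<or> x = 7"
proof (induct x)
  case (of_int z)
  then have "z = 0 \<or> z = 1 \<or> z = 2 \<or> z = 3 \<or> z = 4 \<or> z = 5 \<or> z = 6" by fastforce
  then show ?case by auto
qed

lemma UNIV_7: "UNIV = {1, 2, 3, 4, 5, 6, 7::7}"
  using exhaust_7 by auto

lemma sum_7: "sum f (UNIV::7 set) = f 1 + f 2 + f 3 + f 4 + f 5 + f 6 + f 7"
  unfolding UNIV_7 by (simp add: ac_simps)

lemma inner_vec_7:
  fixes x y :: "real^7"
  shows "x \<bullet> y = x$1 * y$1 + x$2 * y$2 + x$3 * y$3 + x$4 * y$4 + x$5 * y$5 + x$6 * y$6 + x$7 * y$7"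
  by (simp add: inner_vec_def sum_7)

lemma cross7_nth:
  "cross7 u v $ 1 = u$2 * v$3 - u$3 * v$2 - u$6 * v$7 + u$7 * v$6 + u$4 * v$5 - u$5 * v$4"
  "cross7 u v $ 2 = - u$1 * v$3 + u$3 * v$1 + u$5 * v$7 - u$7 * v$5 + u$4 * v$6 - u$6 * v$4"
  "cross7 u v $ 3 = u$1 * v$2 - u$2 * v$1 - u$5 * v$6 + u$6 * v$5 + u$4 * v$7 - u$7 * v$4"
  "cross7 u v $ 4 = - u$1 * v$5 + u$5 * v$1 - u$2 * v$6 + u$6 * v$2 - u$3 * v$7 + u$7 * v$3"
  "cross7 u v $ 5 = - u$2 * v$7 + u$7 * v$2 - u$6 * v$3 + u$3 * v$6 - u$4 * v$1 + u$1 * v$4"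
  "cross7 u v $ 6 = u$1 * v$7 - u$7 * v$1 + u$5 * v$3 - u$3 * v$5 - u$4 * v$2 + u$2 * v$4"
  "cross7 u v $ 7 = - u$1 * v$6 + u$6 * v$1 - u$5 * v$2 + u$2 * v$5 - u$4 * v$3 + u$3 * v$4"
  by (simp_all add: cross7_def phi_def wedge3_def cmp_def axis_def algebra_simps)

lemma inner_cross7: "cross7 u v \<bullet> w = phi u v w"
  by (simp add: inner_vec_7 cross7_nth phi_def wedge3_def cmp_def algebra_simps)

lemma phi_same_last: "phi u v v = 0"
  by (simp add: phi_def wedge3_def algebra_simps)

lemma inner_cross7_cross7:
  "cross7 u w \<bullet> cross7 v y = w \<bullet> cross7 (cross7 u v) y
     - 2 * (u \<bullet> y) * (v \<bullet> w) + (u \<bullet> v) * (y \<bullet> w) + (y \<bullet> v) * (u \<bullet> w)"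
  unfolding inner_vec_7 cross7_nth by algebra

lemma inner_cross7_cross7_same_right:
  "cross7 u y \<bullet> cross7 v y = (y \<bullet> y) * (u \<bullet> v) - (u \<bullet> y) * (v \<bullet> y)"
proof -
  have "y \<bullet> cross7 (cross7 u v) y = 0"
    by (simp add: inner_commute[of y] inner_cross7 phi_same_last)
  then show ?thesis
    by (simp add: inner_cross7_cross7 inner_commute algebra_simps)
qed

theorem proposition2p1:
  fixes A :: "real^7^7" and u v y :: "real^7"
  assumes "g2 A"
    and "u \<bullet> v = 0" and "u \<bullet> y = 0" and "v \<bullet> y = 0"
  shows "bform A (cross7 u y) (cross7 v y)
         = (norm y)\<^sup>2 * bform A u v + bform A y (cross7 (cross7 u v) y)"
proof -
  have derivation: "A *v cross7 u y = cross7 (A *v u) y + cross7 u (A *v y)"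
    using \<open>g2 A\<close> unfolding g2_def by blast
  have "bform A (cross7 u y) (cross7 v y)
      = cross7 (A *v u) y \<bullet> cross7 v y + cross7 u (A *v y) \<bullet> cross7 v y"
    unfolding bform_def derivation by (rule inner_add_left)
  also have "cross7 (A *v u) y \<bullet> cross7 v y = (norm y)\<^sup>2 * bform A u v"
    using \<open>v \<bullet> y = 0\<close>
    by (simp add: inner_cross7_cross7_same_right bform_def power2_norm_eq_inner)
  also have "cross7 u (A *v y) \<bullet> cross7 v y = bform A y (cross7 (cross7 u v) y)"
    unfolding inner_cross7_cross7 bform_def using assms(2-4) by (simp add: inner_commute)
  finally show ?thesis .
qed

end
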